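(* Let $X$ be an $n$-dimensional projective space over a field, $K$ a $k$-dimensional subspace of $X$, and let $s_1,s_2,t_1,t_2$ be integers with $-1\le t_1\le s_1\le\dim K$ and $-1\le t_2\le s_2\le\dim(X/K)$. Put $t:=t_1+t_2+1$ and $s:=s_1+s_2+1$. If $\mathcal B_K\subseteq\mathrm{Gr}_{t_1}(K)$ blocks $\mathcal S_K\subseteq\mathrm{Gr}_{s_1}(K)$ and $\mathcal B_{X/K}\subseteq\mathrm{Gr}_{t_2}(X/K)$ blocks $\mathcal S_{X/K}\subseteq\mathrm{Gr}_{s_2}(X/K)$, then $\mathcal B\subseteq\mathrm{Gr}_t(X)$ blocks $\mathcal S\subseteq\mathrm{Gr}_s(X)$, where $$\mathcal B:=\{T\in\mathrm{Gr}(X): K\cap T\in\mathcal B_K,\ \langle K,T\rangle\in\mathcal B_{X/K}\},\qquad \mathcal S:=\{S\in\mathrm{Gr}(X):K\cap S\in\mathcal S_K,\ \langle K,S\rangle\in\mathcal S_{X/K}\}.$$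
   Context: Projective dimension is used (the empty subspace has dimension $-1$). $\mathrm{Gr}_d(Y)$ denotes the set of $d$-dimensional subspaces of a projective space $Y$ and $\mathrm{Gr}(Y)$ the set of all subspaces. For a $k$-dimensional subspace $K$ of $X$, the quotient space $X/K$ is the projective space of dimension $\dim X-k-1$ whose $r$-dimensional subspaces are the $(r+k+1)$-dimensional subspaces of $X$ containing $K$ (its $(-1)$-dimensional subspace is $K$); the span $\langle K,T\rangle$ is regarded as an element of $X/K$, and containment in $X/K$ is containment in $X$. For $t\le s$, a set $\mathcal B$ of $t$-dimensional subspaces of a projective space is said to block a set $\mathcal S$ of $s$-dimensional subspaces (or be a partial blocking set for $\mathcal S$) if every $S\in\mathcal S$ contains some $T\in\mathcal B$. *)

theory Defs
  imports Complex_Main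
begin

text \<open>Projective geometry of a (finite-dimensional) vector space V over a field:
 projective subspaces are linear subspaces of V, projective dimension = vector dimension - 1.\<close>

definition pdim :: "('a::field \<Rightarrow> 'v::ab_group_add \<Rightarrow> 'v) \<Rightarrow> 'v set \<Rightarrow> int" where
  "pdim scale W = int (vector_space.dim scale W) - 1"

definition Gr :: "('a::field \<Rightarrow> 'v::ab_group_add \<Rightarrow> 'v) \<Rightarrow> int \<Rightarrow> 'v set \<Rightarrow> 'v set set" where
  "Gr scale d Y = {W. module.subspace scale W \<and> W \<subseteq> Y \<and> pdim scale W = d}"

definition Gr_all :: "('a::field \<Rightarrow> 'v::ab_group_add \<Rightarrow> 'v) \<Rightarrow> 'v set \<Rightarrow> 'v set set" where
  "Gr_all scale Y = {W. module.subspace scale W \<and> W \<subseteq> Y}"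

text \<open>Gr_r(X/K): the r-dimensional subspaces of the quotient X/K, i.e. the
 (r + dim K + 1)-dimensional subspaces of X containing K.\<close>
definition Gr_quot :: "('a::field \<Rightarrow> 'v::ab_group_add \<Rightarrow> 'v) \<Rightarrow> int \<Rightarrow> 'v set \<Rightarrow> 'v set \<Rightarrow> 'v set set" where
  "Gr_quot scale r X K = {W. module.subspace scale W \<and> K \<subseteq> W \<and> W \<subseteq> X
      \<and> pdim scale W = r + pdim scale K + 1}"

definition join :: "('a::field \<Rightarrow> 'v::ab_group_add \<Rightarrow> 'v) \<Rightarrow> 'v set \<Rightarrow> 'v set \<Rightarrow> 'v set" where
  "join scale K T = module.span scale (K \<union> T)"

definition blocks :: "'v set set \<Rightarrow> 'v set set \<Rightarrow> bool" where
  "blocks \<B> \<S> \<longleftrightarrow> (\<forall>S\<in>\<S>. \<exists>T\<in>\<B>. T \<subseteq> S)"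

end

theory Submission
  imports Defs
begin

text \<open>By Grassmann's formula, \<open>dim T = dim (K \<inter> T) + dim \<langle>K,T\<rangle> - dim K\<close>, so the
  dimensions of the members of \<open>\<B>\<close> and \<open>\<S>\<close> are forced. For the blocking property, let
  \<open>S \<in> \<S>\<close> and pick \<open>T\<^sub>1 \<in> \<B>\<^sub>K\<close> inside \<open>K \<inter> S\<close> and \<open>W \<in> \<B>\<^bsub>X/K\<^esub>\<close> inside \<open>\<langle>K,S\<rangle>\<close>.
  The modular law gives \<open>W = K + (W \<inter> S)\<close>; if \<open>C\<close> is a complement of \<open>K \<inter> S\<close> in \<open>W \<inter> S\<close>,
  then \<open>T = T\<^sub>1 + C\<close> lies in \<open>S\<close>, meets \<open>K\<close> in \<open>T\<^sub>1 + (K \<inter> C) = T\<^sub>1\<close> (modular law again)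
  and spans \<open>W\<close> together with \<open>K\<close>.\<close>

context module
begin

lemma subspace_modular:
  assumes "subspace B" "subspace C" "A \<subseteq> B"
  shows "B \<inter> span (A \<union> C) = span (A \<union> (B \<inter> C))"
proof
  have "span (A \<union> (B \<inter> C)) \<subseteq> B"
    using assms by (intro span_minimal) auto
  moreover have "span (A \<union> (B \<inter> C)) \<subseteq> span (A \<union> C)"
    by (intro span_mono) auto
  ultimately show "span (A \<union> (B \<inter> C)) \<subseteq> B \<inter> span (A \<union> C)"
    by blast
  show "B \<inter> span (A \<union> C) \<subseteq> span (A \<union> (B \<inter> C))"
  proof
    fix x assume x: "x \<in> B \<inter> span (A \<union> C)"
    have "span C = C" using \<open>subspace C\<close> by simp
    with x obtain a c where ac: "x = a + c" "a \<in> span A" "c \<in> C"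
      using span_Un[of A C] by auto
    have "a \<in> B" using ac(2) assms by (meson span_minimal subsetD)
    then have "c \<in> B" using x ac(1) \<open>subspace B\<close> by (metis IntD1 add_diff_cancel_left' subspace_diff)
    then have "c \<in> span (A \<union> (B \<inter> C))"
      using ac(3) by (simp add: span_base)
    moreover have "a \<in> span (A \<union> (B \<inter> C))"
      using ac(2) span_mono[of A] by blast
    ultimately show "x \<in> span (A \<union> (B \<inter> C))"
      using ac(1) span_add by simp
  qed
qed

end

context finite_dimensional_vector_space
begin

lemma dim_span_Un_add_dim_Int:
  assumes "subspace A" "subspace B"
  shows "dim (span (A \<union> B)) + dim (A \<inter> B) = dim A + dim B"
proof -
  have "span A = A" "span B = B" using assms by simp_all
  then show ?thesis using dim_sums_Int[OF assms] span_Un[of A B] by (simp only:)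
qed

lemma pdim_join_add_pdim_Int:
  assumes "subspace K" "subspace T"
  shows "pdim scale (join scale K T) + pdim scale (K \<inter> T) = pdim scale K + pdim scale T"
  using dim_span_Un_add_dim_Int[OF assms] unfolding pdim_def join_def by linarith

lemma subspace_complement_exists:
  assumes "subspace A" "subspace U" "A \<subseteq> U"
  obtains C where "subspace C" "C \<subseteq> U" "A \<inter> C = {0}" "span (A \<union> C) = U"
proof -
  obtain B where B: "B \<subseteq> A" "independent B" "A \<subseteq> span B" "card B = dim A"
    using basis_exists by blast
  obtain D where D: "B \<subseteq> D" "D \<subseteq> U" "independent D" "U \<subseteq> span D"
    using maximal_independent_subset_extend[of B U] B assms by blast
  define C where "C = span (D - B)"
  have "subspace C" unfolding C_def by simp
  have "C \<subseteq> U"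
    unfolding C_def using D assms(2) by (meson Diff_subset span_minimal subset_trans)
  have span_AC: "span (A \<union> C) = U"
  proof
    show "span (A \<union> C) \<subseteq> U" using \<open>C \<subseteq> U\<close> assms by (intro span_minimal) auto
    have "D \<subseteq> A \<union> C" using B unfolding C_def by (auto intro: span_base)
    then show "U \<subseteq> span (A \<union> C)" using D span_mono by blast
  qed
  have "dim U = card D"
    using D assms(2) by (metis dim_eq_card_independent dim_span span_minimal subset_antisym)
  also have "\<dots> = card B + card (D - B)"
    using B D by (metis card_Diff_subset card_mono finiteI_independent finite_subset le_add_diff_inverse)
  also have "\<dots> = dim A + dim C"
    using B D independent_mono[of D "D - B"]
    by (simp add: C_def dim_eq_card_independent dim_span_eq_card_independent)
  finally have "dim (A \<inter> C) = 0"
    using dim_span_Un_add_dim_Int[OF assms(1) \<open>subspace C\<close>] span_AC by simp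
  then have "A \<inter> C = {0}"
    using assms(1) \<open>subspace C\<close> by (auto simp: subspace_0)
  with \<open>subspace C\<close> \<open>C \<subseteq> U\<close> span_AC show thesis using that by blast
qed

lemma subspace_with_meet_and_join_exists:
  assumes "subspace K" "subspace S" "subspace T\<^sub>1" "subspace W"
    and "T\<^sub>1 \<subseteq> K \<inter> S" "K \<subseteq> W" "W \<subseteq> span (K \<union> S)"
  obtains T where "subspace T" "T \<subseteq> S" "K \<inter> T = T\<^sub>1" "span (K \<union> T) = W"
proof -
  have "subspace (K \<inter> S)" "subspace (W \<inter> S)" "K \<inter> S \<subseteq> W \<inter> S"
    using assms by (auto simp: subspace_inter)
  then obtain C where C: "subspace C" "C \<subseteq> W \<inter> S" "K \<inter> S \<inter> C = {0}" "span (K \<inter> S \<union> C) = W \<inter> S"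
    by (rule subspace_complement_exists)
  define T where "T = span (T\<^sub>1 \<union> C)"
  have "T \<subseteq> S"
    unfolding T_def using assms C by (intro span_minimal) auto
  have "K \<inter> C = {0}"
    using C(2,3) by blast
  then have "K \<inter> T = span (insert 0 T\<^sub>1)"
    unfolding T_def using subspace_modular[OF \<open>subspace K\<close> C(1)] assms(5) by simp
  also have "\<dots> = T\<^sub>1"
    using \<open>subspace T\<^sub>1\<close> by simp
  finally have "K \<inter> T = T\<^sub>1" .
  have "span (K \<union> T) = W"
  proof
    have "T \<subseteq> W"
      unfolding T_def using assms C(2) by (intro span_minimal) auto
    then show "span (K \<union> T) \<subseteq> W"
      using assms by (intro span_minimal) auto
    have "K \<inter> S \<union> C \<subseteq> span (K \<union> T)"
      unfolding T_def by (auto intro: span_base)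
    then have "W \<inter> S \<subseteq> span (K \<union> T)"
      using C(4) by (metis span_minimal subspace_span)
    then have "span (K \<union> (W \<inter> S)) \<subseteq> span (K \<union> T)"
      by (intro span_minimal) (auto intro: span_base)
    moreover have "W = span (K \<union> (W \<inter> S))"
      using subspace_modular[OF \<open>subspace W\<close> \<open>subspace S\<close> \<open>K \<subseteq> W\<close>] assms(7) by auto
    ultimately show "W \<subseteq> span (K \<union> T)" by simp
  qed
  show thesis
    using that[of T] \<open>T \<subseteq> S\<close> \<open>K \<inter> T = T\<^sub>1\<close> \<open>span (K \<union> T) = W\<close>
    by (simp add: T_def)
qed

lemma meet_join_in_Gr:
  assumes "subspace K" "subspace T"
    and "K \<inter> T \<in> Gr scale a K" "join scale K T \<in> Gr_quot scale b UNIV K"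
  shows "T \<in> Gr scale (a + b + 1) UNIV"
  using pdim_join_add_pdim_Int[OF assms(1,2)] assms(2-4) by (auto simp: Gr_def Gr_quot_def)

lemma blocks_meet_join:
  assumes "subspace K"
    and BK: "\<And>T. T \<in> BK \<Longrightarrow> subspace T"
    and BXK: "\<And>W. W \<in> BXK \<Longrightarrow> subspace W \<and> K \<subseteq> W"
    and "blocks BK SK" "blocks BXK SXK"
  shows "blocks {T \<in> Gr_all scale UNIV. K \<inter> T \<in> BK \<and> join scale K T \<in> BXK}
                {S \<in> Gr_all scale UNIV. K \<inter> S \<in> SK \<and> join scale K S \<in> SXK}"
  unfolding blocks_def
proof
  fix S assume "S \<in> {S \<in> Gr_all scale UNIV. K \<inter> S \<in> SK \<and> join scale K S \<in> SXK}"
  then have S: "subspace S" "K \<inter> S \<in> SK" "join scale K S \<in> SXK"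
    by (auto simp: Gr_all_def)
  obtain T\<^sub>1 where "T\<^sub>1 \<in> BK" "T\<^sub>1 \<subseteq> K \<inter> S"
    using \<open>blocks BK SK\<close> S(2) unfolding blocks_def by blast
  obtain W where "W \<in> BXK" "W \<subseteq> span (K \<union> S)"
    using \<open>blocks BXK SXK\<close> S(3) unfolding blocks_def join_def by blast
  obtain T where "subspace T" "T \<subseteq> S" "K \<inter> T = T\<^sub>1" "span (K \<union> T) = W"
    using subspace_with_meet_and_join_exists[OF \<open>subspace K\<close> S(1)]
      BK[OF \<open>T\<^sub>1 \<in> BK\<close>] BXK[OF \<open>W \<in> BXK\<close>] \<open>T\<^sub>1 \<subseteq> K \<inter> S\<close> \<open>W \<subseteq> span (K \<union> S)\<close>
    by metis
  then show "\<exists>T \<in> {T \<in> Gr_all scale UNIV. K \<inter> T \<in> BK \<and> join scale K T \<in> BXK}. T \<subseteq> S"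
    using \<open>T\<^sub>1 \<in> BK\<close> \<open>W \<in> BXK\<close> by (auto simp: Gr_all_def join_def)
qed

end

theorem lemma3p5:
  fixes scale :: "'a::field \<Rightarrow> 'v::ab_group_add \<Rightarrow> 'v"
    and Basis :: "'v set"
    and n k s1 s2 t1 t2 :: int
    and K :: "'v set"
    and BK SK BXK SXK :: "'v set set"
  assumes fdvs: "finite_dimensional_vector_space scale Basis"
    and dimX: "pdim scale UNIV = n"
    and K: "K \<in> Gr scale k UNIV"
    and t1: "-1 \<le> t1" "t1 \<le> s1" "s1 \<le> k"
    and t2: "-1 \<le> t2" "t2 \<le> s2" "s2 \<le> n - k - 1"
    and BK: "BK \<subseteq> Gr scale t1 K" and SK: "SK \<subseteq> Gr scale s1 K"
    and BXK: "BXK \<subseteq> Gr_quot scale t2 UNIV K" and SXK: "SXK \<subseteq> Gr_quot scale s2 UNIV K"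
    and blK: "blocks BK SK" and blXK: "blocks BXK SXK"
  shows "let t = t1 + t2 + 1; s = s1 + s2 + 1;
             \<B> = {T \<in> Gr_all scale UNIV. K \<inter> T \<in> BK \<and> join scale K T \<in> BXK};
             \<S> = {S \<in> Gr_all scale UNIV. K \<inter> S \<in> SK \<and> join scale K S \<in> SXK}
         in \<B> \<subseteq> Gr scale t UNIV \<and> \<S> \<subseteq> Gr scale s UNIV \<and> blocks \<B> \<S>"
proof -
  interpret finite_dimensional_vector_space scale Basis by (rule fdvs)
  have "subspace K" using K by (simp add: Gr_def)
  have "{T \<in> Gr_all scale UNIV. K \<inter> T \<in> BK \<and> join scale K T \<in> BXK} \<subseteq> Gr scale (t1 + t2 + 1) UNIV"
    using BK BXK by (auto simp: Gr_all_def intro!: meet_join_in_Gr[OF \<open>subspace K\<close>])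
  moreover have "{S \<in> Gr_all scale UNIV. K \<inter> S \<in> SK \<and> join scale K S \<in> SXK} \<subseteq> Gr scale (s1 + s2 + 1) UNIV"
    using SK SXK by (auto simp: Gr_all_def intro!: meet_join_in_Gr[OF \<open>subspace K\<close>])
  moreover have "blocks {T \<in> Gr_all scale UNIV. K \<inter> T \<in> BK \<and> join scale K T \<in> BXK}
                        {S \<in> Gr_all scale UNIV. K \<inter> S \<in> SK \<and> join scale K S \<in> SXK}"
    using BK BXK by (intro blocks_meet_join \<open>subspace K\<close> blK blXK) (auto simp: Gr_def Gr_quot_def)
  ultimately show ?thesis by simp
qed

end
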